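(* Let $\alpha\ge 0$ and $p>1$ be constants, and let $n$ be an integer with \[ n\ge 2+\frac{2(\alpha+2)}{p+1}\left(p+\sqrt{p^2+p}\right). \] Then the solution curve of the MEMS problem \[ u''+\frac{n-1}{r}u'+\lambda\frac{r^{\alpha}}{(1-u)^p}=0 \quad (0<r<1),\qquad u'(0)=0,\quad u(1)=0, \] admits at most two turns. That is, with $w$ and $\lambda(t)$ as in the context, $\lambda'(t)$ changes sign at most twice on $(0,\infty)$.
   Context: Here $\lambda>0$ is a parameter, and solutions are required to satisfy $0<u(r)<1$. Let $w(t)$ be the solution of \[ w''+\frac{n-1}{t}w'=\frac{t^{\alpha}}{w^p},\qquad w(0)=1,\quad w'(0)=0 \qquad (t>0). \] This solution is positive and increasing and is defined for all $t>0$. For each $t>0$, the function $u(r)=1-w(tr)/w(t)$ solves the problem with $\lambda=\lambda(t):=t^{\alpha+2}/w(t)^{p+1}$, and all solutions arise this way. The solution curve is \[ t\mapsto(\lambda,u(0))=\bigl(t^{\alpha+2}/w(t)^{p+1},\,1-1/w(t)\bigr), \qquad t\in(0,\infty). \] A turn of the curve is a change of sign of $\lambda'(t)$. *)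

theory Defs
  imports "HOL-Analysis.Analysis"
begin

text \<open>The parametrisation lambda(t) = t^(alpha+2) / w(t)^(p+1) of the solution curve.\<close>
definition mems_lambda :: "(real \<Rightarrow> real) \<Rightarrow> real \<Rightarrow> real \<Rightarrow> real \<Rightarrow> real" where
  "mems_lambda w \<alpha> p t = t powr (\<alpha> + 2) / (w t) powr (p + 1)"

definition at_most_two_sign_changes :: "(real \<Rightarrow> real) \<Rightarrow> real set \<Rightarrow> bool" where
  "at_most_two_sign_changes f S \<longleftrightarrow>
     \<not> (\<exists>t1 t2 t3 t4. t1 \<in> S \<and> t2 \<in> S \<and> t3 \<in> S \<and> t4 \<in> S \<and>
          t1 < t2 \<and> t2 < t3 \<and> t3 < t4 \<and>
          f t1 * f t2 < 0 \<and> f t2 * f t3 < 0 \<and> f t3 * f t4 < 0)"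

end

theory Submission
  imports Defs
begin

text \<open>Since \<lambda>'(t) = (p+1) t^(\<alpha>+1) w(t)^(-p-2) Q(t) with Q = \<beta> w - t w' and
  \<beta> = (\<alpha>+2)/(p+1), the turns are the sign changes of Q. Compare w with the singular solution
  S(t) = v t^\<beta> of the same equation. At a zero of Q, t Q' has the sign of w - S, and w - S and Q
  never vanish together: by Gronwall w would then agree with S near 0, although w(0) = 1 and
  S(0) = 0. Hence Q becomes negative only where w < S and positive again only where w > S.
  As Q > 0 somewhere near 0, three sign changes of Q would make w - S change sign from negative to
  positive to negative. This is ruled out by Y = t^\<kappa> ((\<kappa>+\<beta>)(w - S) - Q), \<kappa> = (n-2)/2,
  which increases wherever w \<ge> S as soon as \<kappa>^2 \<ge> p \<beta> (\<beta>+2\<kappa>); this is exactly the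
  lower bound on n.\<close>

lemma IVT_last_zero:
  fixes f :: "real \<Rightarrow> real"
  assumes ab: "a \<le> b" and cont: "continuous_on {a..b} f" and fa: "f a \<le> 0" and fb: "f b > 0"
  obtains c where "a \<le> c" "c < b" "f c = 0" "\<And>s. c < s \<Longrightarrow> s \<le> b \<Longrightarrow> f s > 0"
proof -
  let ?K = "{a..b} \<inter> f -` {..0}"
  have "closed ?K" using cont by (intro continuous_closed_preimage) auto
  hence "compact ?K" by (simp add: compact_eq_bounded_closed bounded_Int)
  moreover have "a \<in> ?K" using ab fa by auto
  ultimately obtain c where c: "c \<in> ?K" and cmax: "\<And>s. s \<in> ?K \<Longrightarrow> s \<le> c"
    using compact_attains_sup by (metis empty_iff)
  have cb: "c < b" using c fb by (cases "c = b") auto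
  have pos: "f s > 0" if "c < s" "s \<le> b" for s
    using cmax[of s] that c by force
  have "f c = 0"
  proof (rule ccontr)
    assume "f c \<noteq> 0"
    hence "f c < 0" using c by auto
    moreover have "continuous_on {c..b} f" using cont c by (auto elim: continuous_on_subset)
    ultimately obtain s where "c \<le> s" "s \<le> b" "f s = 0"
      using IVT'[of f c 0 b] fb cb by auto
    thus False using pos[of s] \<open>f c < 0\<close> by (cases "s = c") auto
  qed
  thus ?thesis using that c cb pos by auto
qed

lemma IVT_first_zero:
  fixes f :: "real \<Rightarrow> real"
  assumes ab: "a \<le> b" and cont: "continuous_on {a..b} f" and fa: "f a > 0" and fb: "f b \<le> 0"
  obtains c where "a < c" "c \<le> b" "f c = 0" "\<And>s. a \<le> s \<Longrightarrow> s < c \<Longrightarrow> f s > 0"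
proof -
  let ?K = "{a..b} \<inter> f -` {..0}"
  have "closed ?K" using cont by (intro continuous_closed_preimage) auto
  hence "compact ?K" by (simp add: compact_eq_bounded_closed bounded_Int)
  moreover have "b \<in> ?K" using ab fb by auto
  ultimately obtain c where c: "c \<in> ?K" and cmin: "\<And>s. s \<in> ?K \<Longrightarrow> c \<le> s"
    using compact_attains_inf by (metis empty_iff)
  have ac: "a < c" using c fa by (cases "c = a") auto
  have pos: "f s > 0" if "a \<le> s" "s < c" for s
    using cmin[of s] that c by force
  have "f c = 0"
  proof (rule ccontr)
    assume "f c \<noteq> 0"
    hence "f c < 0" using c by auto
    moreover have "continuous_on {a..c} f" using cont c by (auto elim: continuous_on_subset)
    ultimately obtain s where "a \<le> s" "s \<le> c" "f s = 0"
      using IVT2'[of f c 0 a] fa ac by auto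
    thus False using pos[of s] \<open>f c < 0\<close> by (cases "s = c") auto
  qed
  thus ?thesis using that c ac pos by auto
qed

lemma DERIV_nonneg_at_zero_pos_right:
  fixes f :: "real \<Rightarrow> real"
  assumes "DERIV f c :> D" "f c = 0" "\<delta> > 0" "\<And>s. c < s \<Longrightarrow> s < c + \<delta> \<Longrightarrow> f s > 0"
  shows "D \<ge> 0"
proof (rule ccontr)
  assume "\<not> D \<ge> 0"
  then obtain d where d: "d > 0" "\<And>h. 0 < h \<Longrightarrow> h < d \<Longrightarrow> f (c + h) < f c"
    using DERIV_neg_dec_right[OF assms(1)] by auto
  define h where "h = min d \<delta> / 2"
  have h: "0 < h" "h < d" "h < \<delta>" using d(1) assms(3) by (auto simp: h_def)
  thus False using d(2)[OF h(1,2)] assms(2) assms(4)[of "c + h"] by auto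
qed

lemma DERIV_nonpos_at_zero_pos_left:
  fixes f :: "real \<Rightarrow> real"
  assumes "DERIV f c :> D" "f c = 0" "\<delta> > 0" "\<And>s. c - \<delta> < s \<Longrightarrow> s < c \<Longrightarrow> f s > 0"
  shows "D \<le> 0"
proof (rule ccontr)
  assume "\<not> D \<le> 0"
  then obtain d where d: "d > 0" "\<And>h. 0 < h \<Longrightarrow> h < d \<Longrightarrow> f (c - h) < f c"
    using DERIV_pos_inc_left[OF assms(1)] by auto
  define h where "h = min d \<delta> / 2"
  have h: "0 < h" "h < d" "h < \<delta>" using d(1) assms(3) by (auto simp: h_def)
  thus False using d(2)[OF h(1,2)] assms(2) assms(4)[of "c - h"] by auto
qed

lemma powr_neg_ge_tangent:
  fixes r p :: real
  assumes "r > 0" "p \<ge> 0"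
  shows "r powr (-p) \<ge> 1 - p * (r - 1)"
proof -
  have "r powr (-p) = exp (-p * ln r)" using assms by (simp add: powr_def)
  also have "\<dots> \<ge> 1 - p * ln r" using exp_ge_add_one_self[of "-p * ln r"] by simp
  moreover have "p * ln r \<le> p * (r - 1)" using ln_le_minus_one assms by (intro mult_left_mono) auto
  ultimately show ?thesis by linarith
qed

lemma sgn_diff_powr_neg:
  fixes r p :: real
  assumes "r > 0" "p > 0"
  shows "sgn (r - r powr (-p)) = sgn (r - 1)"
proof -
  have "r < 1 \<Longrightarrow> 1 < r powr (-p)" "r > 1 \<Longrightarrow> r powr (-p) < 1"
    using assms powr_less_mono2_neg[of "-p" r 1] powr_less_mono2_neg[of "-p" 1 r] by auto
  thus ?thesis by (cases "r < 1"; cases "r > 1") auto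
qed

lemma abs_powr_neg_diff_le:
  fixes x y m p :: real
  assumes "m > 0" "x \<ge> m" "y \<ge> m" "p \<ge> 0"
  shows "\<bar>x powr (-p) - y powr (-p)\<bar> \<le> p * m powr (-p-1) * \<bar>x - y\<bar>"
proof (rule field_differentiable_bound[of "{m..}", where f = "\<lambda>z. z powr (-p)", simplified])
  fix z :: real assume "m \<le> z"
  hence "z > 0" using assms by simp
  show "((\<lambda>z. z powr (-p)) has_real_derivative -p * z powr (-p-1)) (at z within {m..})"
    using has_real_derivative_powr[OF \<open>z > 0\<close>, of "-p"] by (simp add: has_field_derivative_at_within)
  show "\<bar>-p * z powr (-p-1)\<bar> \<le> p * m powr (-p-1)"
    using assms \<open>m \<le> z\<close> by (simp add: abs_mult powr_mono2' mult_left_mono)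
qed (use assms in auto)

lemma abs_quadratic_form_le:
  fixes a q R b c d K :: real
  assumes "K \<ge> 0" "\<bar>R\<bar> \<le> K * \<bar>a\<bar>"
  shows "\<bar>a * (b * a - q) + q * (c * a - d * q + R)\<bar> \<le> (\<bar>b\<bar> + \<bar>c\<bar> + \<bar>d\<bar> + K + 1) * (a\<^sup>2 + q\<^sup>2)"
proof -
  have "2 * \<bar>a\<bar> * \<bar>q\<bar> \<le> a\<^sup>2 + q\<^sup>2"
    using sum_squares_bound[of "\<bar>a\<bar>" "\<bar>q\<bar>"] by simp
  hence aq: "\<bar>a\<bar> * \<bar>q\<bar> \<le> a\<^sup>2 + q\<^sup>2"
    using zero_le_mult_iff[of "\<bar>a\<bar>" "\<bar>q\<bar>"] by linarith
  have qR: "\<bar>q\<bar> * \<bar>R\<bar> \<le> K * (a\<^sup>2 + q\<^sup>2)"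
    using mult_left_mono[OF assms(2), of "\<bar>q\<bar>"] mult_left_mono[OF aq assms(1)] by (simp add: mult_ac)
  have "a * (b * a - q) + q * (c * a - d * q + R) = b * a\<^sup>2 + (c - 1) * (a * q) - d * q\<^sup>2 + q * R"
    by (simp add: power2_eq_square algebra_simps)
  also have "\<bar>\<dots>\<bar> \<le> \<bar>b * a\<^sup>2\<bar> + \<bar>(c - 1) * (a * q)\<bar> + \<bar>d * q\<^sup>2\<bar> + \<bar>q * R\<bar>"
    by linarith
  also have "\<dots> \<le> \<bar>b\<bar> * a\<^sup>2 + (1 + \<bar>c\<bar>) * (\<bar>a\<bar> * \<bar>q\<bar>) + \<bar>d\<bar> * q\<^sup>2 + \<bar>q\<bar> * \<bar>R\<bar>"
    by (simp add: abs_mult mult_right_mono)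
  also have "\<dots> \<le> \<bar>b\<bar> * (a\<^sup>2 + q\<^sup>2) + (1 + \<bar>c\<bar>) * (a\<^sup>2 + q\<^sup>2) + \<bar>d\<bar> * (a\<^sup>2 + q\<^sup>2) + K * (a\<^sup>2 + q\<^sup>2)"
    using qR aq by (intro add_mono mult_left_mono) auto
  finally show ?thesis by (simp add: algebra_simps)
qed

lemma zero_by_backward_Gronwall:
  fixes E E' :: "real \<Rightarrow> real"
  assumes "a \<le> b" "\<And>t. t \<in> {a..b} \<Longrightarrow> (E has_real_derivative E' t) (at t)"
    "\<And>t. t \<in> {a..b} \<Longrightarrow> E' t \<ge> - M * E t" "E a \<ge> 0" "E b = 0"
  shows "E a = 0"
proof -
  have "exp (M * a) * E a \<le> exp (M * b) * E b"
  proof (rule DERIV_nonneg_imp_nondecreasing[OF assms(1)])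
    fix t assume "a \<le> t" "t \<le> b"
    hence "((\<lambda>t. exp (M * t) * E t) has_real_derivative exp (M * t) * (M * E t + E' t)) (at t)"
      using assms(2)[of t] by (auto intro!: derivative_eq_intros simp: algebra_simps)
    moreover have "exp (M * t) * (M * E t + E' t) \<ge> 0"
      using assms(3)[of t] \<open>a \<le> t\<close> \<open>t \<le> b\<close> by simp
    ultimately show "\<exists>y. ((\<lambda>t. exp (M * t) * E t) has_real_derivative y) (at t) \<and> y \<ge> 0" by blast
  qed
  thus ?thesis using assms(4,5) by (simp add: mult_le_0_iff)
qed

lemma at_most_two_sign_changes_sgn_cong:
  assumes "\<And>t. t \<in> S \<Longrightarrow> sgn (f t) = sgn (g t)"
  shows "at_most_two_sign_changes f S \<longleftrightarrow> at_most_two_sign_changes g S"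
proof -
  have "f x * f y < 0 \<longleftrightarrow> g x * g y < 0" if "x \<in> S" "y \<in> S" for x y
    using assms[OF that(1)] assms[OF that(2)]
    by (metis sgn_mult sgn_less)
  thus ?thesis unfolding at_most_two_sign_changes_def by meson
qed

lemma continuous_on_pos_if_DERIV:
  fixes f :: "real \<Rightarrow> real"
  assumes "0 < x" "\<And>t. t > 0 \<Longrightarrow> (f has_real_derivative f' t) (at t)"
  shows "continuous_on {x..y} f"
proof (intro continuous_at_imp_continuous_on ballI)
  fix t assume "t \<in> {x..y}"
  thus "isCont f t" using assms DERIV_isCont[of f "f' t" t] by auto
qed

lemma continuous_on_Icc_pos_bounded_below:
  fixes f :: "real \<Rightarrow> real"
  assumes "continuous_on {a..b} f" "\<And>t. t \<in> {a..b} \<Longrightarrow> f t > 0"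
  obtains m where "m > 0" "\<And>t. t \<in> {a..b} \<Longrightarrow> m \<le> f t"
proof (cases "a \<le> b")
  case True
  with continuous_attains_inf[OF compact_Icc _ assms(1)]
  obtain t0 where "t0 \<in> {a..b}" "\<forall>t\<in>{a..b}. f t0 \<le> f t" by auto
  thus thesis using that[of "f t0"] assms(2) by auto
qed (use that[of 1] in auto)

locale mems_profile =
  fixes \<alpha> p :: real and n :: nat and w w' w'' :: "real \<Rightarrow> real"
  assumes alpha: "\<alpha> \<ge> 0" and p: "p > 1"
    and n: "real n \<ge> 2 + 2 * (\<alpha> + 2) / (p + 1) * (p + sqrt (p^2 + p))"
    and w_pos: "\<And>t. t \<ge> 0 \<Longrightarrow> w t > 0"
    and w_deriv: "\<And>t. t \<ge> 0 \<Longrightarrow> (w has_real_derivative w' t) (at t within {0..})"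
    and w'_deriv: "\<And>t. t > 0 \<Longrightarrow> (w' has_real_derivative w'' t) (at t)"
    and w_ode: "\<And>t. t > 0 \<Longrightarrow> w'' t + (real n - 1) / t * w' t = t powr \<alpha> / (w t) powr p"
    and w0: "w 0 = 1"
begin

definition "\<beta> = (\<alpha> + 2) / (p + 1)"
definition "\<kappa> = (real n - 2) / 2"

text \<open>\<open>v t powr \<beta>\<close> solves the ODE exactly when \<open>\<gamma> * v powr (p + 1) = 1\<close>.\<close>
definition "\<gamma> = \<beta> * (\<beta> + 2 * \<kappa>)"

definition "sing t = \<gamma> powr (-1 / (p + 1)) * t powr \<beta>"
definition "excess t = w t - sing t"
definition "Q t = \<beta> * w t - t * w' t"
definition "forcing t = t powr (\<alpha> + 2) * w t powr (-p)"
definition "Y t = t powr \<kappa> * ((\<kappa> + \<beta>) * excess t - Q t)"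

lemma beta_pos: "\<beta> > 0"
  using alpha p by (simp add: \<beta>_def)

lemma beta_mult: "\<beta> * (p + 1) = \<alpha> + 2"
  using p by (simp add: \<beta>_def)

lemma kappa_ge: "\<kappa> \<ge> \<beta> * (p + sqrt (p\<^sup>2 + p))"
  using n by (simp add: \<kappa>_def \<beta>_def field_simps)

lemma kappa_pos: "\<kappa> > 0"
  using kappa_ge beta_pos p
  by (smt (verit) mult_pos_pos real_sqrt_ge_zero zero_le_power2)

lemma gamma_pos: "\<gamma> > 0"
  using beta_pos kappa_pos by (simp add: \<gamma>_def)

text \<open>This is the only place where the lower bound on \<open>n\<close> is used.\<close>
lemma p_gamma_le_kappa_sq: "p * \<gamma> \<le> \<kappa>\<^sup>2"
proof -
  have "\<beta> * sqrt (p\<^sup>2 + p) \<le> \<kappa> - p * \<beta>"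
    using kappa_ge by (simp add: algebra_simps)
  moreover have "0 \<le> \<beta> * sqrt (p\<^sup>2 + p)"
    using beta_pos p by simp
  ultimately have "(\<beta> * sqrt (p\<^sup>2 + p))\<^sup>2 \<le> (\<kappa> - p * \<beta>)\<^sup>2"
    by (rule power_mono)
  hence "\<beta>\<^sup>2 * (p\<^sup>2 + p) \<le> (\<kappa> - p * \<beta>)\<^sup>2"
    using p by (simp add: power_mult_distrib)
  thus ?thesis by (simp add: \<gamma>_def power2_eq_square algebra_simps)
qed

lemma sing_pos: "t > 0 \<Longrightarrow> sing t > 0"
  using gamma_pos by (simp add: sing_def)

lemma sing_powr: assumes "t > 0" shows "\<gamma> * sing t powr (p + 1) = t powr (\<alpha> + 2)"
proof -
  have "sing t powr (p + 1) = \<gamma> powr (-1) * t powr (\<beta> * (p + 1))"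
    using assms gamma_pos p by (simp add: sing_def powr_mult powr_powr)
  thus ?thesis using gamma_pos by (simp add: beta_mult powr_minus)
qed

lemma forcing_sing: assumes "t > 0" shows "t powr (\<alpha> + 2) * sing t powr (-p) = \<gamma> * sing t"
  using sing_powr[OF assms] sing_pos[OF assms]
  by (simp flip: sing_powr[OF assms] add: powr_add[symmetric] mult.assoc)

lemma forcing_ratio: assumes "t > 0" shows "forcing t = \<gamma> * sing t * (w t / sing t) powr (-p)"
proof -
  have "w t powr (-p) = sing t powr (-p) * (w t / sing t) powr (-p)"
    using sing_pos[OF assms] w_pos[of t] assms by (simp add: powr_divide)
  thus ?thesis using forcing_sing[OF assms] by (simp add: forcing_def mult.assoc[symmetric])
qed

lemma w_has_derivative: "t > 0 \<Longrightarrow> (w has_real_derivative w' t) (at t)"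
  using w_deriv[of t] at_within_interior[of t "{0..}"] by simp

lemma ode_scaled: assumes "t > 0" shows "t * (t * w'' t) = forcing t - (real n - 1) * (t * w' t)"
proof -
  have "t * (t * w'' t) + (real n - 1) * (t * w' t) = t * (t * (w'' t + (real n - 1) / t * w' t))"
    using assms by (simp add: field_simps)
  also have "\<dots> = forcing t"
    using assms w_pos[of t] w_ode[OF assms]
    by (simp add: forcing_def powr_add powr_minus divide_inverse power2_eq_square mult_ac)
  finally show ?thesis by simp
qed

lemma sing_has_derivative: assumes "t > 0" shows "(sing has_real_derivative \<beta> * sing t / t) (at t)"
  unfolding sing_def[abs_def]
  using assms by (auto intro!: derivative_eq_intros simp: powr_diff)

lemma excess_has_derivative:
  assumes "t > 0" shows "(excess has_real_derivative (\<beta> * excess t - Q t) / t) (at t)"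
  unfolding excess_def[abs_def]
  using assms w_has_derivative[OF assms] sing_has_derivative[OF assms]
  by (auto intro!: derivative_eq_intros simp: Q_def field_simps)

lemma Q_has_derivative:
  assumes "t > 0"
  shows "(Q has_real_derivative (\<gamma> * w t - (\<beta> + 2 * \<kappa>) * Q t - forcing t) / t) (at t)"
proof -
  have D: "(Q has_real_derivative \<beta> * w' t - (w' t + t * w'' t)) (at t)"
    unfolding Q_def[abs_def]
    using w_has_derivative[OF assms] w'_deriv[OF assms] by (auto intro!: derivative_eq_intros)
  have "t * (\<beta> * w' t - (w' t + t * w'' t)) = (\<beta> - 1) * (t * w' t) - t * (t * w'' t)"
    by (simp add: algebra_simps)
  also have "\<dots> = (\<beta> + 2 * \<kappa>) * (t * w' t) - forcing t"
    using ode_scaled[OF assms] by (simp add: \<kappa>_def field_simps)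
  also have "\<dots> = \<gamma> * w t - (\<beta> + 2 * \<kappa>) * Q t - forcing t"
    by (simp add: \<gamma>_def Q_def algebra_simps)
  finally have "\<beta> * w' t - (w' t + t * w'' t) = (\<gamma> * w t - (\<beta> + 2 * \<kappa>) * Q t - forcing t) / t"
    using assms by (simp add: field_simps)
  thus ?thesis using D by simp
qed

lemma Y_has_derivative:
  assumes "t > 0"
  shows "(Y has_real_derivative
           t powr (\<kappa> - 1) * ((\<kappa> + \<beta>)\<^sup>2 * excess t - \<gamma> * w t + forcing t)) (at t)"
proof -
  have "(Y has_real_derivative
          \<kappa> * t powr (\<kappa> - 1) * ((\<kappa> + \<beta>) * excess t - Q t)
          + t powr \<kappa> * ((\<kappa> + \<beta>) * ((\<beta> * excess t - Q t) / t)
                     - (\<gamma> * w t - (\<beta> + 2 * \<kappa>) * Q t - forcing t) / t)) (at t)"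
    (is "(Y has_real_derivative ?D) _")
    unfolding Y_def[abs_def]
    using assms excess_has_derivative[OF assms] Q_has_derivative[OF assms]
    by (auto intro!: derivative_eq_intros)
  moreover have "?D = t powr (\<kappa> - 1) * ((\<kappa> + \<beta>)\<^sup>2 * excess t - \<gamma> * w t + forcing t)"
  proof -
    have "t powr \<kappa> = t powr (\<kappa> - 1) * t"
      using assms by (simp add: powr_diff)
    thus ?thesis using assms by (simp add: field_simps power2_eq_square)
  qed
  ultimately show ?thesis by simp
qed

lemma Y_deriv_factor_nonneg:
  assumes "t > 0" "excess t \<ge> 0"
  shows "(\<kappa> + \<beta>)\<^sup>2 * excess t - \<gamma> * w t + forcing t \<ge> 0"
proof -
  define r where "r = w t / sing t"
  have S: "sing t > 0" using sing_pos[OF assms(1)] .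
  have wr: "w t = sing t * r" and r: "r \<ge> 1"
    using S assms(2) by (simp_all add: r_def excess_def)
  have "forcing t \<ge> \<gamma> * sing t * (1 - p * (r - 1))"
    using forcing_ratio[OF assms(1)] powr_neg_ge_tangent[of r p] r p S gamma_pos
    by (simp add: r_def[symmetric])
  moreover have "(\<kappa> + \<beta>)\<^sup>2 * excess t - \<gamma> * w t + \<gamma> * sing t * (1 - p * (r - 1))
      = sing t * (r - 1) * (\<kappa>\<^sup>2 - p * \<gamma>)"
    by (simp add: excess_def wr \<gamma>_def power2_eq_square algebra_simps)
  moreover have "sing t * (r - 1) * (\<kappa>\<^sup>2 - p * \<gamma>) \<ge> 0"
    using S r p_gamma_le_kappa_sq by simp
  ultimately show ?thesis by linarith
qed

lemma sgn_gamma_w_minus_forcing: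
  assumes "t > 0" shows "sgn (\<gamma> * w t - forcing t) = sgn (excess t)"
proof -
  define r where "r = w t / sing t"
  have S: "sing t > 0" using sing_pos[OF assms] .
  have r: "r > 0" using S w_pos[of t] assms by (simp add: r_def)
  have "\<gamma> * w t - forcing t = \<gamma> * sing t * (r - r powr (-p))"
    using forcing_ratio[OF assms] S by (simp add: r_def algebra_simps)
  moreover have "excess t = sing t * (r - 1)"
    using S by (simp add: r_def excess_def algebra_simps)
  ultimately show ?thesis
    using sgn_diff_powr_neg[OF r] p S gamma_pos by (simp add: sgn_mult)
qed

lemma w_tendsto_at_right_0: "(w \<longlongrightarrow> 1) (at_right 0)"
proof -
  have "(w \<longlongrightarrow> 1) (at 0 within {0..})"
    using DERIV_continuous[OF w_deriv[of 0]] w0 by (simp add: continuous_within)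
  thus ?thesis by (rule tendsto_within_subset) auto
qed

lemma sing_tendsto_at_right_0: "(sing \<longlongrightarrow> 0) (at_right 0)"
proof -
  have "((\<lambda>t. t powr \<beta>) \<longlongrightarrow> 0) (at_right 0)"
    using beta_pos eventually_at_right_less[of "0::real"]
    by (intro tendsto_zero_powrI tendsto_ident_at tendsto_const) (auto elim: eventually_mono)
  thus ?thesis unfolding sing_def[abs_def] using tendsto_mult_right_zero by blast
qed

lemma abs_gamma_sing_minus_forcing_le:
  assumes "0 < t" "t \<le> c" "m > 0" "m \<le> w t" "m \<le> sing t"
  shows "\<bar>\<gamma> * sing t - forcing t\<bar> \<le> c powr (\<alpha> + 2) * (p * m powr (-p-1)) * \<bar>excess t\<bar>"
proof -
  have "\<gamma> * sing t - forcing t = t powr (\<alpha> + 2) * (sing t powr (-p) - w t powr (-p))"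
    using forcing_sing[OF assms(1)] by (simp add: forcing_def algebra_simps)
  also have "\<bar>\<dots>\<bar> \<le> c powr (\<alpha> + 2) * (p * m powr (-p-1) * \<bar>sing t - w t\<bar>)"
    unfolding abs_mult using assms alpha p powr_mono2[of "\<alpha> + 2" t c]
    by (intro mult_mono abs_powr_neg_diff_le) auto
  finally show ?thesis by (simp add: excess_def abs_minus_commute mult_ac)
qed

text \<open>Gronwall backwards from \<open>c\<close> for \<open>excess\<^sup>2 + Q\<^sup>2\<close>: the pair \<open>(excess, Q)\<close> satisfies a
  first-order system that is Lipschitz on \<open>[e, c]\<close>, where \<open>w\<close> and \<open>sing\<close> stay away from \<open>0\<close>.\<close>
lemma excess_vanishes_before_common_zero:
  assumes c: "c > 0" "excess c = 0" "Q c = 0" and e: "0 < e" "e < c"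
  shows "excess e = 0"
proof -
  have "continuous_on {e..c} (\<lambda>t. min (w t) (sing t))"
    using e DERIV_isCont[OF w_has_derivative] DERIV_isCont[OF sing_has_derivative]
    by (intro continuous_at_imp_continuous_on ballI continuous_intros) auto
  then obtain m where m: "m > 0" "\<And>t. t \<in> {e..c} \<Longrightarrow> m \<le> min (w t) (sing t)"
    by (rule continuous_on_Icc_pos_bounded_below) (use e w_pos sing_pos in auto)
  define K where "K = c powr (\<alpha> + 2) * (p * m powr (-p-1))"
  have K: "K \<ge> 0" using p by (simp add: K_def)
  have lip: "\<bar>\<gamma> * sing t - forcing t\<bar> \<le> K * \<bar>excess t\<bar>" if "t \<in> {e..c}" for t
    unfolding K_def using that e m(1) m(2)[OF that] by (intro abs_gamma_sing_minus_forcing_le) auto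
  define C where "C = \<beta> + \<gamma> + (\<beta> + 2 * \<kappa>) + K + 1"
  define E where "E t = (excess t)\<^sup>2 + (Q t)\<^sup>2" for t
  define E' where "E' t = 2 * excess t * ((\<beta> * excess t - Q t) / t)
                       + 2 * Q t * ((\<gamma> * w t - (\<beta> + 2 * \<kappa>) * Q t - forcing t) / t)" for t
  have "E e = 0"
  proof (rule zero_by_backward_Gronwall[where a = e and b = c and E' = E' and M = "2 * C / e"])
    fix t assume t: "t \<in> {e..c}"
    hence tp: "t > 0" using e by auto
    show "(E has_real_derivative E' t) (at t)"
      unfolding E_def[abs_def] E'_def
      using excess_has_derivative[OF tp] Q_has_derivative[OF tp]
      by (auto intro!: derivative_eq_intros simp: mult_ac)
    have "t * E' t = 2 * (excess t * (\<beta> * excess t - Q t)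
        + Q t * (\<gamma> * excess t - (\<beta> + 2 * \<kappa>) * Q t + (\<gamma> * sing t - forcing t)))"
      using tp by (simp add: E'_def excess_def field_simps)
    also have "\<bar>\<dots>\<bar> \<le> 2 * (C * E t)"
      using abs_quadratic_form_le[OF K lip[OF t], of \<beta> "Q t" \<gamma> "\<beta> + 2 * \<kappa>"]
        beta_pos gamma_pos kappa_pos
      by (simp add: C_def E_def)
    finally have "\<bar>e * E' t\<bar> \<le> 2 * C * E t"
      using t tp e mult_right_mono[of e t "\<bar>E' t\<bar>"] by (simp add: abs_mult)
    hence "- (2 * C * E t) \<le> e * E' t"
      by (simp add: abs_le_iff)
    thus "E' t \<ge> - (2 * C / e) * E t"
      using e by (simp add: field_simps)
  qed (use e c in \<open>auto simp: E_def\<close>)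
  thus ?thesis by (simp add: E_def add_nonneg_eq_0_iff)
qed

lemma excess_Q_no_common_zero:
  assumes "c > 0" "excess c = 0" "Q c = 0" shows False
proof -
  have "\<forall>\<^sub>F t in at_right 0. 1/2 < w t"
    using order_tendstoD(1)[OF w_tendsto_at_right_0, of "1/2"] by simp
  moreover have "\<forall>\<^sub>F t in at_right 0. sing t < 1/2"
    using order_tendstoD(2)[OF sing_tendsto_at_right_0, of "1/2"] by simp
  moreover have "\<forall>\<^sub>F t in at_right 0. 0 < t \<and> t < c"
    unfolding eventually_at_right_field using assms(1) by auto
  ultimately have "\<forall>\<^sub>F t in at_right 0. 1/2 < w t \<and> sing t < 1/2 \<and> 0 < t \<and> t < c"
    by (auto intro: eventually_conj)
  then obtain e where "1/2 < w e" "sing e < 1/2" "0 < e" "e < c"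
    using eventually_happens'[OF trivial_limit_at_right_real] by blast
  thus False using excess_vanishes_before_common_zero[OF assms] by (simp add: excess_def)
qed

lemma excess_neg_at_Q_down_crossing:
  assumes "0 < x" "x < y" "Q x > 0" "Q y < 0"
  obtains c where "x < c" "c < y" "excess c < 0"
proof -
  have cont: "continuous_on {x..y} Q"
    using assms Q_has_derivative by (intro continuous_on_pos_if_DERIV)
  obtain c where c: "x < c" "c \<le> y" "Q c = 0" "\<And>s. x \<le> s \<Longrightarrow> s < c \<Longrightarrow> Q s > 0"
    by (rule IVT_first_zero[OF _ cont]) (use assms in auto)
  have "c < y" using c assms by (cases "c = y") auto
  have cpos: "c > 0" using c assms by simp
  have "(\<gamma> * w c - (\<beta> + 2 * \<kappa>) * Q c - forcing c) / c \<le> 0"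
    using c by (intro DERIV_nonpos_at_zero_pos_left[OF Q_has_derivative[OF cpos] c(3), of "c - x"]) auto
  hence "sgn (excess c) \<le> 0"
    using cpos c(3) by (simp add: sgn_gamma_w_minus_forcing[OF cpos, symmetric] divide_le_0_iff)
  moreover have "excess c \<noteq> 0" using excess_Q_no_common_zero[OF cpos _ c(3)] by blast
  ultimately show ?thesis using that c \<open>c < y\<close> by (simp add: sgn_if split: if_splits)
qed

lemma excess_pos_at_Q_up_crossing:
  assumes "0 < x" "x < y" "Q x < 0" "Q y > 0"
  obtains c where "x < c" "c < y" "excess c > 0"
proof -
  have cont: "continuous_on {x..y} Q"
    using assms Q_has_derivative by (intro continuous_on_pos_if_DERIV)
  obtain c where c: "x \<le> c" "c < y" "Q c = 0" "\<And>s. c < s \<Longrightarrow> s \<le> y \<Longrightarrow> Q s > 0"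
    by (rule IVT_last_zero[OF _ cont]) (use assms in auto)
  have "x < c" using c assms by (cases "c = x") auto
  have cpos: "c > 0" using \<open>x < c\<close> assms by simp
  have "(\<gamma> * w c - (\<beta> + 2 * \<kappa>) * Q c - forcing c) / c \<ge> 0"
    using c by (intro DERIV_nonneg_at_zero_pos_right[OF Q_has_derivative[OF cpos] c(3), of "y - c"]) auto
  hence "sgn (excess c) \<ge> 0"
    using cpos c(3) by (simp add: sgn_gamma_w_minus_forcing[OF cpos, symmetric] zero_le_divide_iff)
  moreover have "excess c \<noteq> 0" using excess_Q_no_common_zero[OF cpos _ c(3)] by blast
  ultimately show ?thesis using that c \<open>x < c\<close> by (simp add: sgn_if split: if_splits)
qed

lemma Y_mono_where_excess_nonneg:
  assumes "0 < a" "a \<le> b" "\<And>t. a \<le> t \<Longrightarrow> t \<le> b \<Longrightarrow> excess t \<ge> 0"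
  shows "Y a \<le> Y b"
proof (rule DERIV_nonneg_imp_nondecreasing[of a b Y])
  fix t assume t: "a \<le> t" "t \<le> b"
  hence tpos: "t > 0" using assms(1) by simp
  have "t powr (\<kappa> - 1) * ((\<kappa> + \<beta>)\<^sup>2 * excess t - \<gamma> * w t + forcing t) \<ge> 0"
    using Y_deriv_factor_nonneg[OF tpos assms(3)[OF t]] by simp
  thus "\<exists>y. (Y has_real_derivative y) (at t) \<and> y \<ge> 0"
    using Y_has_derivative[OF tpos] by blast
qed (use assms in auto)

text \<open>Between two consecutive zeros \<open>d\<^sub>1 < d\<^sub>2\<close> of \<open>excess\<close> with \<open>excess \<ge> 0\<close> in between,
  \<open>Y d\<^sub>1 \<ge> 0 \<ge> Y d\<^sub>2\<close> while \<open>Y\<close> increases, so \<open>Q d\<^sub>1 = 0\<close>: a common zero.\<close>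
lemma excess_no_neg_pos_neg:
  assumes "0 < e1" "e1 < e2" "e2 < e3" "excess e1 < 0" "excess e2 > 0" "excess e3 < 0"
  shows False
proof -
  have "continuous_on {e1..e2} excess" "continuous_on {e2..e3} excess"
    using assms excess_has_derivative by (auto intro!: continuous_on_pos_if_DERIV)
  obtain d1 where
    d1: "e1 \<le> d1" "d1 < e2" "excess d1 = 0" "\<And>s. d1 < s \<Longrightarrow> s \<le> e2 \<Longrightarrow> excess s > 0"
    by (rule IVT_last_zero[OF _ \<open>continuous_on {e1..e2} excess\<close>]) (use assms in auto)
  obtain d2 where
    d2: "e2 < d2" "d2 \<le> e3" "excess d2 = 0" "\<And>s. e2 \<le> s \<Longrightarrow> s < d2 \<Longrightarrow> excess s > 0"
    by (rule IVT_first_zero[OF _ \<open>continuous_on {e2..e3} excess\<close>]) (use assms in auto)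
  have d1pos: "d1 > 0" and d2pos: "d2 > 0" using d1 d2 assms by auto
  have "(\<beta> * excess d1 - Q d1) / d1 \<ge> 0"
    using d1 by (intro DERIV_nonneg_at_zero_pos_right[OF excess_has_derivative[OF d1pos] d1(3), of "e2 - d1"]) auto
  hence "Q d1 \<le> 0" using d1pos d1(3) by (simp add: zero_le_divide_iff divide_le_0_iff)
  have "(\<beta> * excess d2 - Q d2) / d2 \<le> 0"
    using d2 by (intro DERIV_nonpos_at_zero_pos_left[OF excess_has_derivative[OF d2pos] d2(3), of "d2 - e2"]) auto
  hence "Q d2 \<ge> 0" using d2pos d2(3) by (simp add: zero_le_divide_iff divide_le_0_iff)
  have "excess t \<ge> 0" if "d1 \<le> t" "t \<le> d2" for t
  proof (cases "t \<le> e2")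
    case True
    thus ?thesis using that d1(3) d1(4)[of t] by (cases "t = d1") auto
  next
    case False
    thus ?thesis using that d2(3) d2(4)[of t] by (cases "t = d2") auto
  qed
  hence "Y d1 \<le> Y d2" using Y_mono_where_excess_nonneg d1pos d1 d2 by simp
  moreover have "d1 powr \<kappa> * Q d1 \<le> 0" "0 \<le> d2 powr \<kappa> * Q d2"
    using \<open>Q d1 \<le> 0\<close> \<open>Q d2 \<ge> 0\<close> by (simp_all add: mult_nonneg_nonpos)
  moreover have "Y d1 = - (d1 powr \<kappa> * Q d1)" "Y d2 = - (d2 powr \<kappa> * Q d2)"
    using d1(3) d2(3) by (simp_all add: Y_def)
  ultimately have "d1 powr \<kappa> * Q d1 = 0" by linarith
  hence "Q d1 = 0" using d1pos by simp
  thus False using excess_Q_no_common_zero[OF d1pos d1(3)] by blast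
qed

lemma no_Q_sign_pattern:
  assumes x: "0 < x1" "x1 < x2" "x2 < x3" "x3 < x4"
    and Q: "Q x1 > 0" "Q x2 < 0" "Q x3 > 0" "Q x4 < 0"
  shows False
proof -
  obtain c1 where c1: "x1 < c1" "c1 < x2" "excess c1 < 0"
    using excess_neg_at_Q_down_crossing[OF x(1,2) Q(1,2)] .
  obtain c2 where c2: "x2 < c2" "c2 < x3" "excess c2 > 0"
    by (rule excess_pos_at_Q_up_crossing[of x2 x3]) (use x Q in auto)
  obtain c3 where c3: "x3 < c3" "c3 < x4" "excess c3 < 0"
    by (rule excess_neg_at_Q_down_crossing[of x3 x4]) (use x Q in auto)
  show False
    using excess_no_neg_pos_neg[of c1 c2 c3] x c1 c2 c3 by linarith
qed

definition "lambda_factor t = (p + 1) * t powr (\<alpha> + 1) / w t powr (p + 2)"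

lemma lambda_factor_pos: "t > 0 \<Longrightarrow> lambda_factor t > 0"
  using p w_pos[of t] by (simp add: lambda_factor_def)

lemma mems_lambda_has_derivative:
  assumes "t > 0"
  shows "(mems_lambda w \<alpha> p has_real_derivative lambda_factor t * Q t) (at t)"
proof -
  have wpos: "w t > 0" using w_pos assms by simp
  let ?D = "((\<alpha> + 2) * t powr (\<alpha> + 1) * w t powr (p + 1) - t powr (\<alpha> + 2) * ((p + 1) * w t powr p * w' t))
          / (w t powr (p + 1) * w t powr (p + 1))"
  have "(mems_lambda w \<alpha> p has_real_derivative ?D) (at t)"
    unfolding mems_lambda_def[abs_def]
    using assms wpos w_has_derivative[OF assms]
    by (auto intro!: derivative_eq_intros simp: add.commute)
  moreover have "?D = lambda_factor t * Q t"
  proof -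
    have "t powr (\<alpha> + 2) = t powr (\<alpha> + 1) * t" "w t powr (p + 1) = w t powr p * w t"
      "w t powr (p + 2) = w t powr p * w t * w t"
      using assms wpos by (simp_all add: powr_add power2_eq_square)
    thus ?thesis
      unfolding beta_mult[symmetric] using wpos
      by (simp add: lambda_factor_def Q_def field_simps power2_eq_square)
  qed
  ultimately show ?thesis by simp
qed

lemma mems_lambda_tendsto_at_right_0: "(mems_lambda w \<alpha> p \<longlongrightarrow> 0) (at_right 0)"
proof -
  have "((\<lambda>t. t powr (\<alpha> + 2)) \<longlongrightarrow> 0) (at_right 0)"
    using alpha eventually_at_right_less[of "0::real"]
    by (intro tendsto_zero_powrI tendsto_ident_at tendsto_const) (auto elim: eventually_mono)
  moreover have "((\<lambda>t. w t powr (p + 1)) \<longlongrightarrow> 1 powr (p + 1)) (at_right 0)"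
    using w_tendsto_at_right_0 by (intro tendsto_powr') auto
  ultimately have "((\<lambda>t. t powr (\<alpha> + 2) / w t powr (p + 1)) \<longlongrightarrow> 0 / 1 powr (p + 1)) (at_right 0)"
    by (intro tendsto_divide) auto
  thus ?thesis by (simp add: mems_lambda_def[abs_def])
qed

text \<open>Since \<open>\<lambda>\<close> rises from \<open>0\<close>, it must increase somewhere before any \<open>t > 0\<close>.\<close>
lemma exists_Q_pos_before:
  assumes "t > 0"
  obtains s where "0 < s" "s < t" "Q s > 0"
proof -
  let ?L = "mems_lambda w \<alpha> p"
  have "?L t > 0" using assms w_pos[of t] by (simp add: mems_lambda_def)
  hence "\<forall>\<^sub>F s in at_right 0. ?L s < ?L t"
    using order_tendstoD(2)[OF mems_lambda_tendsto_at_right_0] by blast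
  moreover have "\<forall>\<^sub>F s in at_right 0. 0 < s \<and> s < t"
    unfolding eventually_at_right_field using assms by auto
  ultimately have "\<forall>\<^sub>F s in at_right 0. ?L s < ?L t \<and> 0 < s \<and> s < t"
    by (rule eventually_conj)
  then obtain e where e: "?L e < ?L t" "0 < e" "e < t"
    using eventually_happens'[OF trivial_limit_at_right_real] by blast
  have "\<And>z. e \<le> z \<Longrightarrow> z \<le> t \<Longrightarrow> (?L has_real_derivative lambda_factor z * Q z) (at z)"
    using mems_lambda_has_derivative e by simp
  from MVT2[OF \<open>e < t\<close> this]
  obtain z where z: "e < z" "z < t" "?L t - ?L e = (t - e) * (lambda_factor z * Q z)" by blast
  hence "0 < (t - e) * (lambda_factor z * Q z)" using e by simp
  hence "0 < lambda_factor z * Q z" by (rule zero_less_mult_pos) (use e in simp)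
  hence "Q z > 0" by (rule zero_less_mult_pos) (use lambda_factor_pos z e in simp)
  thus thesis using z e by (intro that[of z]) auto
qed

lemma sgn_deriv_mems_lambda:
  assumes "t > 0" shows "sgn (deriv (mems_lambda w \<alpha> p) t) = sgn (Q t)"
proof -
  have "deriv (mems_lambda w \<alpha> p) t = lambda_factor t * Q t"
    using DERIV_imp_deriv[OF mems_lambda_has_derivative[OF assms]] .
  moreover have "lambda_factor t > 0" using lambda_factor_pos[OF assms] .
  ultimately show ?thesis by (simp add: sgn_mult)
qed

lemma Q_at_most_two_sign_changes: "at_most_two_sign_changes Q {0<..}"
  unfolding at_most_two_sign_changes_def
proof clarify
  fix t1 t2 t3 t4 :: real
  assume t: "0 < t1" "0 < t2" "0 < t3" "0 < t4" "t1 < t2" "t2 < t3" "t3 < t4"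
    and signs: "Q t1 * Q t2 < 0" "Q t2 * Q t3 < 0" "Q t3 * Q t4 < 0"
  show False
  proof (cases "Q t1 > 0")
    case True
    hence "Q t2 < 0" using signs(1) by (simp add: mult_less_0_iff)
    hence "Q t3 > 0" using signs(2) by (simp add: mult_less_0_iff)
    hence "Q t4 < 0" using signs(3) by (simp add: mult_less_0_iff)
    show False
      using no_Q_sign_pattern[of t1 t2 t3 t4] t True \<open>Q t2 < 0\<close> \<open>Q t3 > 0\<close> \<open>Q t4 < 0\<close> by simp
  next
    case False
    hence "Q t1 < 0" using signs(1) by (cases "Q t1 = 0") auto
    hence "Q t2 > 0" using signs(1) by (simp add: mult_less_0_iff)
    hence "Q t3 < 0" using signs(2) by (simp add: mult_less_0_iff)
    obtain s where "0 < s" "s < t1" "Q s > 0" using exists_Q_pos_before t(1) by blast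
    thus False
      using no_Q_sign_pattern[of s t1 t2 t3] t \<open>Q t1 < 0\<close> \<open>Q t2 > 0\<close> \<open>Q t3 < 0\<close> by simp
  qed
qed

end

theorem theorem4p2:
  fixes \<alpha> p :: real and n :: nat and w w' w'' :: "real \<Rightarrow> real"
  assumes alpha: "\<alpha> \<ge> 0" and p: "p > 1"
    and n: "real n \<ge> 2 + 2 * (\<alpha> + 2) / (p + 1) * (p + sqrt (p^2 + p))"
    and w_pos: "\<And>t. t \<ge> 0 \<Longrightarrow> w t > 0"
    and w_deriv: "\<And>t. t \<ge> 0 \<Longrightarrow> (w has_real_derivative w' t) (at t within {0..})"
    and w'_deriv: "\<And>t. t > 0 \<Longrightarrow> (w' has_real_derivative w'' t) (at t)"
    and w_ode: "\<And>t. t > 0 \<Longrightarrow> w'' t + (real n - 1) / t * w' t = t powr \<alpha> / (w t) powr p"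
    and w0: "w 0 = 1" and w'0: "w' 0 = 0"
  shows "at_most_two_sign_changes (\<lambda>t. deriv (mems_lambda w \<alpha> p) t) {0<..}"
proof -
  interpret mems_profile \<alpha> p n w w' w''
    using alpha p n w_pos w_deriv w'_deriv w_ode w0 by unfold_locales
  have "sgn (deriv (mems_lambda w \<alpha> p) t) = sgn (Q t)" if "t \<in> {0<..}" for t
    using sgn_deriv_mems_lambda that by simp
  thus ?thesis
    using at_most_two_sign_changes_sgn_cong Q_at_most_two_sign_changes by blast
qed

end
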